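(* Let $r=1$ and let $g,d$ and ramification sequences $\alpha,\beta$ satisfy $\rho(g,r,d,\alpha,\beta)=0$. Then the EH group is the full symmetric group on $YT(g,r,d,\alpha,\beta)$.
   Context: Ramification sequences: $\alpha=(\alpha_0,\dots,\alpha_r)$ integers with $d-r\ge\alpha_0\ge\cdots\ge\alpha_r\ge0$, $|\alpha|=\sum\alpha_i$; $g-d+r\ge0$; $\rho(g,r,d,\alpha,\beta)=g-(r+1)(g-d+r)-|\alpha|-|\beta|$. Skew diagram $\sigma(g,r,d,\alpha,\beta)$ (with $m=g-d+r$): rows $k=1,\dots,r+1$ numbered top to bottom, row $k$ consisting of boxes $(k,c)$ with $\alpha_0-\alpha_{r+1-k}<c\le\alpha_0+m+\beta_{k-1}$ (columns numbered left to right); it has $g$ boxes when $\rho=0$. $YT(g,r,d,\alpha,\beta)$ is the set of standard Young tableaux of this shape: bijective fillings with $1,\dots,g$ strictly increasing along rows (left to right) and columns (top to bottom). The distance between boxes $(i,j),(i',j')$ is $|i-i'|+|j-j'|$. For $1\le t<g$ and $a>0$, $\pi_{t,a}$ is the permutation of $YT(g,r,d,\alpha,\beta)$ exchanging the entries $t$ and $t+1$ in every tableau where they lie in different rows and different columns at distance exactly $a$, and fixing all other tableaux. The EH group is the subgroup of the symmetric group on $YT(g,r,d,\alpha,\beta)$ generated by all $\pi_{t,a}$. *)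

theory Defs
  imports "HOL-Algebra.Bij" "HOL-Algebra.Generated_Groups"
begin

definition ram_seq :: "int \<Rightarrow> nat \<Rightarrow> int list \<Rightarrow> bool" where
  "ram_seq d r al \<longleftrightarrow> length al = r + 1 \<and> al ! 0 \<le> d - int r \<and> al ! r \<ge> 0
     \<and> (\<forall>i<r. al ! (Suc i) \<le> al ! i)"

definition brill_noether_rho :: "int \<Rightarrow> nat \<Rightarrow> int \<Rightarrow> int list \<Rightarrow> int list \<Rightarrow> int" where
  "brill_noether_rho g r d al be =
     g - (int r + 1) * (g - d + int r) - sum_list al - sum_list be"

(* boxes (k,c): row k (top to bottom, 1..r+1), column c (left to right) *)
definition skew_shape :: "int \<Rightarrow> nat \<Rightarrow> int \<Rightarrow> int list \<Rightarrow> int list \<Rightarrow> (int \<times> int) set" where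
  "skew_shape g r d al be =
     {(k, c). 1 \<le> k \<and> k \<le> int r + 1 \<and>
        al ! 0 - al ! nat (int r + 1 - k) < c \<and>
        c \<le> al ! 0 + (g - d + int r) + be ! nat (k - 1)}"

definition YT :: "int \<Rightarrow> nat \<Rightarrow> int \<Rightarrow> int list \<Rightarrow> int list \<Rightarrow> ((int \<times> int) \<Rightarrow> int) set" where
  "YT g r d al be =
     {T. bij_betw T (skew_shape g r d al be) {1..g}
       \<and> (\<forall>x. x \<notin> skew_shape g r d al be \<longrightarrow> T x = 0)
       \<and> (\<forall>i j j'. (i, j) \<in> skew_shape g r d al be \<and> (i, j') \<in> skew_shape g r d al be \<and> j < j'
                   \<longrightarrow> T (i, j) < T (i, j'))
       \<and> (\<forall>i i' j. (i, j) \<in> skew_shape g r d al be \<and> (i', j) \<in> skew_shape g r d al be \<and> i < i'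
                   \<longrightarrow> T (i, j) < T (i', j))}"

definition pos_of :: "((int \<times> int) \<Rightarrow> int) \<Rightarrow> int \<Rightarrow> int \<times> int" where
  "pos_of T t = (THE x. T x = t)"

definition box_dist :: "int \<times> int \<Rightarrow> int \<times> int \<Rightarrow> int" where
  "box_dist p q = \<bar>fst p - fst q\<bar> + \<bar>snd p - snd q\<bar>"

definition pi_ta :: "int \<Rightarrow> int \<Rightarrow> ((int \<times> int) \<Rightarrow> int) \<Rightarrow> ((int \<times> int) \<Rightarrow> int)" where
  "pi_ta t a T =
     (let p = pos_of T t; q = pos_of T (t + 1) in
      if fst p \<noteq> fst q \<and> snd p \<noteq> snd q \<and> box_dist p q = a
      then (\<lambda>x. if T x = t then t + 1 else if T x = t + 1 then t else T x)
      else T)"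

definition EH_group :: "int \<Rightarrow> nat \<Rightarrow> int \<Rightarrow> int list \<Rightarrow> int list
     \<Rightarrow> (((int \<times> int) \<Rightarrow> int) \<Rightarrow> ((int \<times> int) \<Rightarrow> int)) set" where
  "EH_group g r d al be =
     generate (BijGroup (YT g r d al be))
       {restrict (pi_ta t a) (YT g r d al be) | t a. 1 \<le> t \<and> t < g \<and> 0 < a}"

end

theory Submission
  imports Defs "HOL-Combinatorics.Permutations"
begin

text \<open>
  Every generator \<open>pi_ta t a\<close> is an involution, and conjugating a transposition by an
  involution gives again a transposition; so it suffices to show that the transpositions of the
  EH group connect all tableaux. For \<open>r = 1\<close> a tableau is determined by the entries of its first
  row. A tableau without a valley (an entry \<open>k\<close> in row 2 with \<open>k + 1\<close> in row 1) has first row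
  \<open>{1..n}\<close>, so there is exactly one; every other tableau has a valley, and swapping it lowers the
  sum of the first row. At the valley-free tableau the peak \<open>t = n\<close> lies at the largest possible
  distance, and there \<open>pi_ta t a\<close> is itself a transposition. By induction on the
  first-row sum, conjugating by suitable generators, the swap of any peak is a transposition of
  the group; these swaps connect every tableau to the valley-free one, and transpositions along
  a connected graph generate the full symmetric group.
\<close>

section \<open>Transpositions in groups of bijections\<close>

definition transposition_on :: "'a set \<Rightarrow> 'a \<Rightarrow> 'a \<Rightarrow> 'a \<Rightarrow> 'a" where
  "transposition_on Y u v = restrict (Transposition.transpose u v) Y"

lemma transposition_on_commute: "transposition_on Y u v = transposition_on Y v u"
  by (simp add: transposition_on_def transpose_commute)

lemma restrict_involution_in_Bij:
  assumes "f ` Y \<subseteq> Y" and "\<And>y. y \<in> Y \<Longrightarrow> f (f y) = y"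
  shows "restrict f Y \<in> Bij Y"
proof -
  have "bij_betw f Y Y"
    by (rule bij_betw_byWitness[of Y f f]) (use assms in auto)
  then show ?thesis
    by (simp add: Bij_def)
qed

lemma transposition_on_in_Bij: "u \<in> Y \<Longrightarrow> v \<in> Y \<Longrightarrow> transposition_on Y u v \<in> Bij Y"
  unfolding transposition_on_def
  by (rule restrict_involution_in_Bij) (auto simp: transpose_def)

lemma BijGroup_mult: "f \<in> Bij Y \<Longrightarrow> h \<in> Bij Y \<Longrightarrow> f \<otimes>\<^bsub>BijGroup Y\<^esub> h = compose Y f h"
  by (simp add: BijGroup_def)

lemma BijGroup_conj_transposition_on:
  assumes f: "f \<in> Bij Y" and invol: "\<And>y. y \<in> Y \<Longrightarrow> f (f y) = y" and u: "u \<in> Y" and v: "v \<in> Y"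
  shows "f \<otimes>\<^bsub>BijGroup Y\<^esub> transposition_on Y u v \<otimes>\<^bsub>BijGroup Y\<^esub> f
    = transposition_on Y (f u) (f v)"
proof -
  have fY: "f y \<in> Y" if "y \<in> Y" for y
    using f that by (auto simp: Bij_def bij_betw_def)
  have f_eq_iff: "f a = f b \<longleftrightarrow> a = b" if "a \<in> Y" "b \<in> Y" for a b
    by (metis invol that)
  have f_transpose: "f (Transposition.transpose u v w) = Transposition.transpose (f u) (f v) (f w)"
    if "w \<in> Y" for w
    using that u v by (auto simp: transpose_def f_eq_iff)
  have "compose Y (compose Y f (transposition_on Y u v)) f = transposition_on Y (f u) (f v)"
  proof
    fix z
    show "compose Y (compose Y f (transposition_on Y u v)) f z = transposition_on Y (f u) (f v) z"
      using f_transpose[OF fY, of z] invol[of z] fY[of z]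
      by (simp add: compose_def transposition_on_def)
  qed
  moreover have "compose Y f (transposition_on Y u v) \<in> Bij Y"
    using assms by (simp add: compose_Bij transposition_on_in_Bij)
  ultimately show ?thesis
    using assms by (simp add: BijGroup_mult transposition_on_in_Bij)
qed

lemma subgroup_transposition_on_trans:
  assumes H: "subgroup H (BijGroup Y)"
    and "transposition_on Y x y \<in> H" "transposition_on Y x z \<in> H"
    and "x \<in> Y" "y \<in> Y" "z \<in> Y" "y \<noteq> x" "y \<noteq> z"
  shows "transposition_on Y y z \<in> H"
proof -
  let ?f = "transposition_on Y x z"
  have "?f \<otimes>\<^bsub>BijGroup Y\<^esub> transposition_on Y x y \<otimes>\<^bsub>BijGroup Y\<^esub> ?f \<in> H"
    using assms by (simp add: subgroup.m_closed)
  moreover have "?f \<otimes>\<^bsub>BijGroup Y\<^esub> transposition_on Y x y \<otimes>\<^bsub>BijGroup Y\<^esub> ?f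
      = transposition_on Y (?f x) (?f y)"
    using assms by (intro BijGroup_conj_transposition_on transposition_on_in_Bij)
      (auto simp: transposition_on_def transpose_def)
  moreover have "?f x = z" "?f y = y"
    using assms by (auto simp: transposition_on_def)
  ultimately show ?thesis
    by (simp add: transposition_on_commute)
qed

lemma restrict_involution_eq_transposition_on:
  assumes invol: "\<And>y. y \<in> Y \<Longrightarrow> f (f y) = y" and "u \<in> Y"
    and moved: "\<And>y. y \<in> Y \<Longrightarrow> f y \<noteq> y \<Longrightarrow> y = u \<or> y = f u"
  shows "restrict f Y = transposition_on Y u (f u)"
proof
  fix z
  show "restrict f Y z = transposition_on Y u (f u) z"
    using invol[of u] moved[of z] \<open>u \<in> Y\<close>
    by (cases "z \<in> Y") (auto simp: transposition_on_def transpose_def)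
qed

lemma subgroup_eq_carrier_BijGroup_if_transpositions:
  assumes "finite Y" and H: "subgroup H (BijGroup Y)"
    and transp: "\<And>u v. u \<in> Y \<Longrightarrow> v \<in> Y \<Longrightarrow> u \<noteq> v \<Longrightarrow> transposition_on Y u v \<in> H"
  shows "H = carrier (BijGroup Y)"
proof
  show "H \<subseteq> carrier (BijGroup Y)"
    using H by (rule subgroup.subset)
  show "carrier (BijGroup Y) \<subseteq> H"
  proof
    fix f assume "f \<in> carrier (BijGroup Y)"
    then have f: "f \<in> Bij Y" by (simp add: BijGroup_def)
    define p where "p x = (if x \<in> Y then f x else x)" for x
    have "bij_betw p Y Y"
      using f bij_betw_cong[of Y p f Y] by (simp add: Bij_def p_def)
    then have "p permutes Y"
      by (rule bij_imp_permutes) (simp add: p_def)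
    from this \<open>finite Y\<close> have "restrict p Y \<in> H"
    proof (induction p rule: permutes_induct)
      case id
      then show ?case
        using subgroup.one_closed[OF H] by (simp add: BijGroup_def id_def restrict_def)
    next
      case (swap a b p)
      have "restrict p Y \<in> Bij Y"
        using permutes_imp_bij[OF swap.hyps(4)] by (simp add: Bij_def)
      moreover have "restrict (Transposition.transpose a b \<circ> p) Y
          = compose Y (transposition_on Y a b) (restrict p Y)"
        using permutes_in_image[OF swap.hyps(4)]
        by (auto simp: compose_def transposition_on_def)
      ultimately have "restrict (Transposition.transpose a b \<circ> p) Y
          = transposition_on Y a b \<otimes>\<^bsub>BijGroup Y\<^esub> restrict p Y"
        by (simp add: BijGroup_mult transposition_on_in_Bij swap.hyps(1,2))
      also have "\<dots> \<in> H"
        using subgroup.m_closed[OF H transp[OF swap.hyps(1-3)] swap.IH] .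
      finally show ?case .
    qed
    moreover have "restrict p Y = f"
      using f by (auto simp: p_def Bij_def extensional_def)
    ultimately show "f \<in> H" by simp
  qed
qed

lemma transpositions_in_subgroup_by_descent:
  fixes \<phi> :: "'a \<Rightarrow> nat"
  assumes H: "subgroup H (BijGroup Y)"
    and unique: "\<And>x y. x \<in> Y \<Longrightarrow> y \<in> Y \<Longrightarrow> P x \<Longrightarrow> P y \<Longrightarrow> x = y"
    and descent: "\<And>x. x \<in> Y \<Longrightarrow> \<not> P x \<Longrightarrow>
       \<exists>y\<in>Y. \<phi> y < \<phi> x \<and> y \<noteq> x \<and> transposition_on Y x y \<in> H"
    and u: "u \<in> Y" and v: "v \<in> Y" and "u \<noteq> v"
  shows "transposition_on Y u v \<in> H"
proof -
  obtain r where r: "r \<in> Y" and r_min: "\<And>y. y \<in> Y \<Longrightarrow> \<phi> r \<le> \<phi> y"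
    using ex_has_least_nat[of "\<lambda>x. x \<in> Y" u \<phi>] u by blast
  have "P r"
    using descent[OF r] r_min by (meson leD)
  have to_root: "transposition_on Y x r \<in> H" if "x \<in> Y" "x \<noteq> r" for x
    using that
  proof (induction "\<phi> x" arbitrary: x rule: less_induct)
    case less
    then have "\<not> P x"
      using unique \<open>P r\<close> r by blast
    then obtain y where y: "y \<in> Y" "\<phi> y < \<phi> x" "y \<noteq> x" "transposition_on Y x y \<in> H"
      using descent less.prems(1) by blast
    show ?case
    proof (cases "y = r")
      case False
      then have "transposition_on Y y r \<in> H"
        using less.hyps y by blast
      then show ?thesis
        using subgroup_transposition_on_trans[OF H _ _ y(1) less.prems(1) r] y less.prems
        by (simp add: transposition_on_commute)
    qed (use y in simp)
  qed
  show ?thesis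
  proof (cases "u = r \<or> v = r")
    case True
    then show ?thesis
      using to_root u v \<open>u \<noteq> v\<close> transposition_on_commute by metis
  next
    case False
    then show ?thesis
      using subgroup_transposition_on_trans[OF H _ _ r u v] to_root[OF u] to_root[OF v] \<open>u \<noteq> v\<close>
      by (simp add: transposition_on_commute)
  qed
qed

section \<open>Ranks under strictly monotone maps\<close>

lemma card_le_image_strict_mono_on:
  fixes f :: "'a :: linorder \<Rightarrow> 'b :: linorder"
  assumes "strict_mono_on A f" and "c \<in> A"
  shows "card {w \<in> f ` A. w \<le> f c} = card {x \<in> A. x \<le> c}"
proof -
  have "f x \<le> f c \<longleftrightarrow> x \<le> c" if "x \<in> A" for x
    using strict_mono_on_less_eq[OF assms(1) that assms(2)] .
  then have "{w \<in> f ` A. w \<le> f c} = f ` {x \<in> A. x \<le> c}"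
    by auto
  moreover have "inj_on f {x \<in> A. x \<le> c}"
    using strict_mono_on_imp_inj_on[OF assms(1)] by (rule inj_on_subset) auto
  ultimately show ?thesis
    by (simp add: card_image)
qed

lemma strict_mono_on_card_le:
  assumes "finite B"
  shows "strict_mono_on B (\<lambda>b. card {w \<in> B. w \<le> (b :: 'a :: linorder)})"
proof (rule strict_mono_onI)
  fix a b assume "a \<in> B" "b \<in> B" "a < b"
  then have "card {w \<in> B. w \<le> a} \<le> card ({w \<in> B. w \<le> b} - {b})"
    using assms by (intro card_mono) auto
  also have "\<dots> < card {w \<in> B. w \<le> b}"
    using assms \<open>b \<in> B\<close> by (intro card_Diff1_less) auto
  finally show "card {w \<in> B. w \<le> a} < card {w \<in> B. w \<le> b}" .
qed

lemma strict_mono_on_eq_if_image_eq: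
  fixes f h :: "'a :: linorder \<Rightarrow> 'b :: linorder"
  assumes "finite A" "strict_mono_on A f" "strict_mono_on A h" "f ` A = h ` A" "c \<in> A"
  shows "f c = h c"
proof -
  let ?rank = "\<lambda>b. card {w \<in> f ` A. w \<le> b}"
  have "?rank (f c) = ?rank (h c)"
    using card_le_image_strict_mono_on[OF assms(2,5)] card_le_image_strict_mono_on[OF assms(3,5)]
      assms(4) by simp
  moreover have "inj_on ?rank (f ` A)"
    using strict_mono_on_imp_inj_on[OF strict_mono_on_card_le[of "f ` A"]] \<open>finite A\<close> by simp
  ultimately show ?thesis
    using assms(4,5) by (auto dest: inj_onD)
qed

lemma initial_segment_if_complement_upward_closed:
  fixes A B :: "int set"
  assumes cover: "A \<union> B = {1..n}" and disj: "A \<inter> B = {}"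
    and up: "\<And>k. k \<in> B \<Longrightarrow> k + 1 \<le> n \<Longrightarrow> k + 1 \<in> B"
  shows "A = {1..int (card A)}"
proof (cases "A = {}")
  case False
  have up_closed: "x \<le> n \<longrightarrow> x \<in> B" if "b \<in> B" "b \<le> x" for b x
    using that(2,1) by (induction x rule: int_ge_induct) (auto intro: up)
  have down_closed: "x \<in> A" if "a \<in> A" "1 \<le> x" "x \<le> a" for a x
  proof -
    have "a \<le> n"
      using that(1) cover by auto
    then have "x \<in> A \<union> B"
      using cover that by auto
    moreover have "x \<notin> B"
      using up_closed[of x a] that disj \<open>a \<le> n\<close> by blast
    ultimately show ?thesis by blast
  qed
  have "finite A"
    using cover by (metis finite_Un finite_atLeastAtMost_int)
  define m where "m = Max A"
  have "m \<in> A"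
    using Max_in[OF \<open>finite A\<close> False] by (simp add: m_def)
  then have "A = {1..m}"
    using cover down_closed[of m] Max_ge[OF \<open>finite A\<close>] by (fastforce simp: m_def)
  moreover have "1 \<le> m"
    using \<open>m \<in> A\<close> cover by auto
  ultimately show ?thesis
    by simp
qed simp

section \<open>Two-row skew tableaux\<close>

definition swap_entries :: "int \<Rightarrow> ('b \<Rightarrow> int) \<Rightarrow> 'b \<Rightarrow> int" where
  "swap_entries t T = Transposition.transpose t (t + 1) \<circ> T"

lemma swap_entries_apply: "swap_entries t T x = Transposition.transpose t (t + 1) (T x)"
  by (simp add: swap_entries_def)

lemma swap_entries_swap_entries [simp]: "swap_entries t (swap_entries t T) = T"
  by (simp add: swap_entries_def fun_eq_iff)

lemma swap_entries_commute:
  "k \<noteq> t \<Longrightarrow> k \<noteq> t + 1 \<Longrightarrow> k + 1 \<noteq> t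
    \<Longrightarrow> swap_entries k (swap_entries t T) = swap_entries t (swap_entries k T)"
  by (auto simp: swap_entries_def fun_eq_iff transpose_def)

lemma swap_entries_neq: "T x = t \<Longrightarrow> swap_entries t T \<noteq> T"
  by (metis swap_entries_apply transpose_apply_first add_cancel_left_right one_neq_zero)

lemma transpose_succ_less:
  "(a :: int) < b \<Longrightarrow> \<not> (a = t \<and> b = t + 1)
    \<Longrightarrow> Transposition.transpose t (t + 1) a < Transposition.transpose t (t + 1) b"
  by (auto simp: transpose_def)

lemma box_dist_commute: "box_dist p q = box_dist q p"
  by (simp add: box_dist_def abs_minus_commute)

text \<open>
  The skew shape for \<open>r = 1\<close>: row 1 occupies columns \<open>s + 1..e1\<close> and row 2 columns \<open>1..e2\<close>,
  where \<open>s = \<alpha>\<^sub>0 - \<alpha>\<^sub>1\<close> and \<open>e\<^sub>i = \<alpha>\<^sub>0 + (g - d + 1) + \<beta>\<^sub>i\<^sub>-\<^sub>1\<close>.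
\<close>

locale two_row_tableaux =
  fixes g s e1 e2 :: int and S :: "(int \<times> int) set" and Y :: "((int \<times> int) \<Rightarrow> int) set"
  assumes s_nonneg: "0 \<le> s" and s_le_e1: "s \<le> e1" and e2_le_e1: "e2 \<le> e1"
    and S_eq: "S = {(k, c). (k = 1 \<and> s < c \<and> c \<le> e1) \<or> (k = 2 \<and> 0 < c \<and> c \<le> e2)}"
    and Y_eq: "Y = {T. bij_betw T S {1..g} \<and> (\<forall>x. x \<notin> S \<longrightarrow> T x = 0)
       \<and> (\<forall>i j j'. (i, j) \<in> S \<and> (i, j') \<in> S \<and> j < j' \<longrightarrow> T (i, j) < T (i, j'))
       \<and> (\<forall>i i' j. (i, j) \<in> S \<and> (i', j) \<in> S \<and> i < i' \<longrightarrow> T (i, j) < T (i', j))}"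
begin

lemma mem_S_row1 [simp]: "(1, c) \<in> S \<longleftrightarrow> s < c \<and> c \<le> e1"
  by (simp add: S_eq)

lemma mem_S_row2 [simp]: "(2, c) \<in> S \<longleftrightarrow> 0 < c \<and> c \<le> e2"
  by (simp add: S_eq)

lemma mem_S_rows: "(i, c) \<in> S \<Longrightarrow> i = 1 \<or> i = 2"
  by (auto simp: S_eq)

lemma finite_S: "finite S"
proof -
  have "S = Pair 1 ` {s<..e1} \<union> Pair 2 ` {0<..e2}"
    by (auto simp: S_eq)
  then show ?thesis
    by simp
qed

lemma tableau_bij: "T \<in> Y \<Longrightarrow> bij_betw T S {1..g}"
  by (simp add: Y_eq)

lemma tableau_outside: "T \<in> Y \<Longrightarrow> x \<notin> S \<Longrightarrow> T x = 0"
  unfolding Y_eq by blast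

lemma tableau_row_less: "T \<in> Y \<Longrightarrow> (i, j) \<in> S \<Longrightarrow> (i, j') \<in> S \<Longrightarrow> j < j' \<Longrightarrow> T (i, j) < T (i, j')"
  by (simp add: Y_eq)

lemma tableau_col_less: "T \<in> Y \<Longrightarrow> (i, j) \<in> S \<Longrightarrow> (i', j) \<in> S \<Longrightarrow> i < i' \<Longrightarrow> T (i, j) < T (i', j)"
  by (simp add: Y_eq)

lemma tableau_range: "T \<in> Y \<Longrightarrow> x \<in> S \<Longrightarrow> 1 \<le> T x \<and> T x \<le> g"
  using tableau_bij bij_betwE by fastforce

lemma tableau_eq_iff: "T \<in> Y \<Longrightarrow> x \<in> S \<Longrightarrow> y \<in> S \<Longrightarrow> T x = T y \<longleftrightarrow> x = y"
  using tableau_bij by (metis bij_betw_def inj_onD)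

lemma tableau_surj: "T \<in> Y \<Longrightarrow> 1 \<le> v \<Longrightarrow> v \<le> g \<Longrightarrow> \<exists>x\<in>S. T x = v"
  using tableau_bij by (metis atLeastAtMost_iff bij_betw_def imageE)

lemma finite_Y: "finite Y"
proof (rule finite_subset)
  show "Y \<subseteq> {T. \<forall>x. (x \<in> S \<longrightarrow> T x \<in> {1..g}) \<and> (x \<notin> S \<longrightarrow> T x = 0)}"
    using tableau_range tableau_outside by auto
  show "finite {T. \<forall>x. (x \<in> S \<longrightarrow> T x \<in> {1..g}) \<and> (x \<notin> S \<longrightarrow> (T x :: int) = 0)}"
    by (rule finite_set_of_finite_funs) (simp_all add: finite_S)
qed

lemma pos_of_eq:
  assumes T: "T \<in> Y" and x: "x \<in> S"
  shows "pos_of T (T x) = x"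
  unfolding pos_of_def
proof (rule the_equality)
  fix y assume y: "T y = T x"
  have "y \<in> S"
    using tableau_outside[OF T, of y] tableau_range[OF T x] y by fastforce
  then show "y = x"
    using tableau_eq_iff[OF T _ x] y by blast
qed simp

lemma pi_ta_eq:
  assumes "T \<in> Y" "P \<in> S" "Q \<in> S" "T P = t" "T Q = t + 1"
  shows "pi_ta t a T
    = (if fst P \<noteq> fst Q \<and> snd P \<noteq> snd Q \<and> box_dist P Q = a then swap_entries t T else T)"
  using pos_of_eq[OF assms(1,2)] pos_of_eq[OF assms(1,3)] assms(4,5)
  by (simp add: pi_ta_def swap_entries_def transpose_def comp_def)

lemma swap_entries_in_Y:
  assumes T: "T \<in> Y" and P: "P \<in> S" and Q: "Q \<in> S" and "T P = t" "T Q = t + 1"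
    and rows: "fst P \<noteq> fst Q" and cols: "snd P \<noteq> snd Q"
  shows "swap_entries t T \<in> Y"
proof -
  have t_range: "1 \<le> t" "t + 1 \<le> g"
    using tableau_range[OF T P] tableau_range[OF T Q] assms by simp_all
  have not_swapped: "\<not> (T x = t \<and> T y = t + 1)" if "x \<in> S" "y \<in> S" "x \<noteq> P \<or> y \<noteq> Q" for x y
    using that tableau_eq_iff[OF T that(1) P] tableau_eq_iff[OF T that(2) Q] assms by auto
  have "bij_betw (swap_entries t T) S {1..g}"
    unfolding swap_entries_def using t_range
    by (intro bij_betw_trans[OF tableau_bij[OF T]] bij_betw_transpose_iff) auto
  moreover have "swap_entries t T x = 0" if "x \<notin> S" for x
    using tableau_outside[OF T that] t_range by (simp add: swap_entries_apply)
  moreover have "swap_entries t T (i, j) < swap_entries t T (i, j')"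
    if "(i, j) \<in> S" "(i, j') \<in> S" "j < j'" for i j j'
  proof -
    have "(i, j) \<noteq> P \<or> (i, j') \<noteq> Q"
      using rows by auto
    then show ?thesis
      using transpose_succ_less[OF tableau_row_less[OF T that] not_swapped[OF that(1,2)]]
      by (simp add: swap_entries_apply)
  qed
  moreover have "swap_entries t T (i, j) < swap_entries t T (i', j)"
    if "(i, j) \<in> S" "(i', j) \<in> S" "i < i'" for i i' j
  proof -
    have "(i, j) \<noteq> P \<or> (i', j) \<noteq> Q"
      using cols by auto
    then show ?thesis
      using transpose_succ_less[OF tableau_col_less[OF T that] not_swapped[OF that(1,2)]]
      by (simp add: swap_entries_apply)
  qed
  ultimately show ?thesis
    by (simp add: Y_eq)
qed

lemma pi_ta_in_Y_and_involutive:
  assumes T: "T \<in> Y" and "1 \<le> t" "t < g"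
  shows "pi_ta t a T \<in> Y \<and> pi_ta t a (pi_ta t a T) = T"
proof -
  obtain P Q where P: "P \<in> S" "T P = t" and Q: "Q \<in> S" "T Q = t + 1"
    using tableau_surj[OF T, of t] tableau_surj[OF T, of "t + 1"] assms by auto
  show ?thesis
  proof (cases "fst P \<noteq> fst Q \<and> snd P \<noteq> snd Q \<and> box_dist P Q = a")
    case True
    have "swap_entries t T \<in> Y"
      using swap_entries_in_Y[OF T P(1) Q(1) P(2) Q(2)] True by simp
    moreover have "swap_entries t T Q = t" "swap_entries t T P = t + 1"
      using P Q by (simp_all add: swap_entries_apply)
    ultimately show ?thesis
      using pi_ta_eq[OF T P(1) Q(1) P(2) Q(2)] pi_ta_eq[of "swap_entries t T" Q P t a]
        True P Q box_dist_commute[of P Q] by auto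
  next
    case False
    then have "pi_ta t a T = T"
      using pi_ta_eq[OF T P(1) Q(1) P(2) Q(2), of a] by argo
    with T show ?thesis by simp
  qed
qed

definition row_entries :: "((int \<times> int) \<Rightarrow> int) \<Rightarrow> int \<Rightarrow> int set" where
  "row_entries T i = (\<lambda>c. T (i, c)) ` {c. (i, c) \<in> S}"

lemma row_entries_Un:
  assumes T: "T \<in> Y"
  shows "row_entries T 1 \<union> row_entries T 2 = {1..g}"
proof -
  have "T ` S \<subseteq> row_entries T 1 \<union> row_entries T 2"
  proof
    fix y assume "y \<in> T ` S"
    then obtain i c where ic: "(i, c) \<in> S" "y = T (i, c)"
      by auto
    then have "i = 1 \<or> i = 2"
      using mem_S_rows by blast
    then show "y \<in> row_entries T 1 \<union> row_entries T 2"
      by (elim disjE) (use ic in \<open>auto simp: row_entries_def\<close>)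
  qed
  moreover have "row_entries T 1 \<union> row_entries T 2 \<subseteq> T ` S"
    by (auto simp: row_entries_def)
  ultimately show ?thesis
    using tableau_bij[OF T] by (simp add: bij_betw_def)
qed

lemma row_entries_disjoint: "T \<in> Y \<Longrightarrow> row_entries T 1 \<inter> row_entries T 2 = {}"
  by (auto simp: row_entries_def tableau_eq_iff)

lemma card_row_entries_1: "T \<in> Y \<Longrightarrow> card (row_entries T 1) = nat (e1 - s)"
proof -
  assume T: "T \<in> Y"
  have "inj_on (\<lambda>c. T (1, c)) {c. (1, c) \<in> S}"
    by (rule inj_onI) (simp add: tableau_eq_iff[OF T])
  moreover have "{c. (1, c) \<in> S} = {s<..e1}"
    by auto
  ultimately show ?thesis
    by (simp add: row_entries_def card_image)
qed

lemma strict_mono_on_row: "T \<in> Y \<Longrightarrow> strict_mono_on {c. (i, c) \<in> S} (\<lambda>c. T (i, c))"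
  by (rule strict_mono_onI) (simp add: tableau_row_less)

lemma tableau_eq_if_row_entries_eq:
  assumes T: "T \<in> Y" and T': "T' \<in> Y" and row1: "row_entries T 1 = row_entries T' 1"
  shows "T = T'"
proof
  fix x
  have rows: "row_entries T i = row_entries T' i" if "i = 1 \<or> i = 2" for i
    using that row1 row_entries_Un[OF T] row_entries_Un[OF T'] row_entries_disjoint[OF T]
      row_entries_disjoint[OF T'] by blast
  have finite_cols: "finite {c. (i, c) \<in> S}" for i
    using finite_S by (rule finite_surj[where f = snd]) force
  show "T x = T' x"
  proof (cases "x \<in> S")
    case True
    obtain i c where x: "x = (i, c)"
      by fastforce
    then have "i = 1 \<or> i = 2" and c: "c \<in> {c. (i, c) \<in> S}"
      using True mem_S_rows by auto
    then show ?thesis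
      using strict_mono_on_eq_if_image_eq[OF finite_cols[of i] strict_mono_on_row[OF T, of i]
          strict_mono_on_row[OF T', of i] rows[of i, unfolded row_entries_def] c] x
      by simp
  qed (simp add: tableau_outside T T')
qed

definition peak_at :: "((int \<times> int) \<Rightarrow> int) \<Rightarrow> int \<Rightarrow> int \<Rightarrow> int \<Rightarrow> bool" where
  "peak_at T t c1 c2 \<longleftrightarrow>
     (1, c1) \<in> S \<and> (2, c2) \<in> S \<and> c1 \<noteq> c2 \<and> T (1, c1) = t \<and> T (2, c2) = t + 1"

definition valley_at :: "((int \<times> int) \<Rightarrow> int) \<Rightarrow> int \<Rightarrow> int \<Rightarrow> int \<Rightarrow> bool" where
  "valley_at T k d1 d2 \<longleftrightarrow> (1, d1) \<in> S \<and> (2, d2) \<in> S \<and> T (2, d2) = k \<and> T (1, d1) = k + 1"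

definition valley_free :: "((int \<times> int) \<Rightarrow> int) \<Rightarrow> bool" where
  "valley_free T \<longleftrightarrow> (\<forall>k d1 d2. \<not> valley_at T k d1 d2)"

lemma row2_successor_column_le:
  assumes T: "T \<in> Y" and "(1, c1) \<in> S" "(2, c2) \<in> S" "T (1, c1) = t" "T (2, c2) = t + 1"
  shows "c2 \<le> c1"
proof (rule ccontr)
  assume "\<not> c2 \<le> c1"
  then have "(1, c2) \<in> S"
    using assms e2_le_e1 by auto
  then have "T (1, c1) < T (1, c2)" and "T (1, c2) < T (2, c2)"
    using tableau_row_less[OF T \<open>(1, c1) \<in> S\<close>] tableau_col_less[OF T _ \<open>(2, c2) \<in> S\<close>]
      \<open>\<not> c2 \<le> c1\<close> by auto
  then show False
    using assms by simp
qed

lemma valley_columns_less: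
  assumes T: "T \<in> Y" and v: "valley_at T k d1 d2"
  shows "d2 < d1"
proof (rule ccontr)
  assume "\<not> d2 < d1"
  have d1: "(1, d1) \<in> S" and d2: "(2, d2) \<in> S"
    using v by (simp_all add: valley_at_def)
  then have "(1, d2) \<in> S"
    using \<open>\<not> d2 < d1\<close> e2_le_e1 by auto
  have "T (1, d1) \<le> T (1, d2)"
  proof (cases "d1 = d2")
    case False
    then show ?thesis
      using tableau_row_less[OF T d1 \<open>(1, d2) \<in> S\<close>] \<open>\<not> d2 < d1\<close> by simp
  qed simp
  also have "T (1, d2) < T (2, d2)"
    using tableau_col_less[OF T \<open>(1, d2) \<in> S\<close> d2] by simp
  finally show False
    using v by (simp add: valley_at_def)
qed

lemma peak_at_swap_valley:
  assumes T: "T \<in> Y" and v: "valley_at T k d1 d2"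
  shows "peak_at (swap_entries k T) k d1 d2"
  using valley_columns_less[OF T v] v by (auto simp: peak_at_def valley_at_def swap_entries_apply)

lemma peak_at_swap_other:
  "peak_at T t c1 c2 \<Longrightarrow> k \<noteq> t \<Longrightarrow> k \<noteq> t + 1 \<Longrightarrow> k + 1 \<noteq> t
    \<Longrightarrow> peak_at (swap_entries k T) t c1 c2"
  by (simp add: peak_at_def swap_entries_apply transpose_def)

lemma swap_peak_in_Y: "T \<in> Y \<Longrightarrow> peak_at T t c1 c2 \<Longrightarrow> swap_entries t T \<in> Y"
  by (rule swap_entries_in_Y[of T "(1, c1)" "(2, c2)"]) (auto simp: peak_at_def)

lemma swap_valley_in_Y:
  assumes T: "T \<in> Y" and v: "valley_at T k d1 d2"
  shows "swap_entries k T \<in> Y"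
  using valley_columns_less[OF T v] v
  by (intro swap_entries_in_Y[OF T, of "(2, d2)" "(1, d1)"]) (auto simp: valley_at_def)

lemma pi_ta_peak:
  "T \<in> Y \<Longrightarrow> peak_at T t c1 c2 \<Longrightarrow> pi_ta t (box_dist (1, c1) (2, c2)) T = swap_entries t T"
  by (subst pi_ta_eq[of T "(1, c1)" "(2, c2)"]) (auto simp: peak_at_def)

lemma pi_ta_same_row:
  "T \<in> Y \<Longrightarrow> (i, c) \<in> S \<Longrightarrow> (i, c') \<in> S \<Longrightarrow> T (i, c) = t \<Longrightarrow> T (i, c') = t + 1 \<Longrightarrow> pi_ta t a T = T"
  by (subst pi_ta_eq[of T "(i, c)" "(i, c')"]) auto

lemma pi_ta_moves_only_peaks_and_valleys:
  assumes T: "T \<in> Y" and "1 \<le> t" "t < g" and moved: "pi_ta t a T \<noteq> T"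
  shows "\<exists>d1 d2. box_dist (1, d1) (2, d2) = a \<and> (peak_at T t d1 d2 \<or> valley_at T t d1 d2)"
proof -
  obtain P Q where P: "P \<in> S" "T P = t" and Q: "Q \<in> S" "T Q = t + 1"
    using tableau_surj[OF T, of t] tableau_surj[OF T, of "t + 1"] assms by auto
  have differ: "fst P \<noteq> fst Q" "snd P \<noteq> snd Q" "box_dist P Q = a"
    using pi_ta_eq[OF T P(1) Q(1) P(2) Q(2), of a] moved by (auto split: if_splits)
  obtain i c i' c' where PQ: "P = (i, c)" "Q = (i', c')"
    by fastforce
  have "i = 1 \<or> i = 2" "i' = 1 \<or> i' = 2" "i \<noteq> i'"
    using mem_S_rows P(1) Q(1) differ(1) PQ by auto
  then consider "i = 1" "i' = 2" | "i = 2" "i' = 1"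
    by auto
  then show ?thesis
  proof cases
    case 1
    then have "peak_at T t c c'" "box_dist (1, c) (2, c') = a"
      using P Q differ PQ by (auto simp: peak_at_def)
    then show ?thesis by blast
  next
    case 2
    then have "valley_at T t c' c" "box_dist (1, c') (2, c) = a"
      using P Q differ PQ box_dist_commute[of "(1, c')"] by (auto simp: valley_at_def)
    then show ?thesis by blast
  qed
qed

definition row1_sum :: "((int \<times> int) \<Rightarrow> int) \<Rightarrow> nat" where
  "row1_sum T = (\<Sum>c\<in>{s<..e1}. nat (T (1, c)))"

lemma row1_sum_swap_valley_less:
  assumes T: "T \<in> Y" and v: "valley_at T k d1 d2"
  shows "row1_sum (swap_entries k T) < row1_sum T"
  unfolding row1_sum_def
proof (rule sum_strict_mono_ex1)
  have not_k: "T (1, c) \<noteq> k" if "s < c" "c \<le> e1" for c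
    using v that tableau_eq_iff[OF T, of "(1, c)" "(2, d2)"] by (auto simp: valley_at_def)
  show "\<forall>c\<in>{s<..e1}. nat (swap_entries k T (1, c)) \<le> nat (T (1, c))"
    using not_k by (auto simp: swap_entries_apply transpose_def)
  have "1 \<le> k"
    using v tableau_range[OF T, of "(2, d2)"] by (simp add: valley_at_def)
  then show "\<exists>c\<in>{s<..e1}. nat (swap_entries k T (1, c)) < nat (T (1, c))"
    using v by (intro bexI[of _ d1]) (auto simp: valley_at_def swap_entries_apply)
qed simp

lemma row_entries_valley_free:
  assumes T: "T \<in> Y" and vf: "valley_free T"
  shows "row_entries T 1 = {1..e1 - s}"
proof -
  have "row_entries T 1 = {1..int (card (row_entries T 1))}"
  proof (rule initial_segment_if_complement_upward_closed[OF row_entries_Un[OF T] row_entries_disjoint[OF T]])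
    fix k assume k: "k \<in> row_entries T 2" "k + 1 \<le> g"
    moreover have "k \<in> {1..g}"
      using row_entries_Un[OF T] k(1) by blast
    ultimately have "k + 1 \<in> row_entries T 1 \<union> row_entries T 2"
      using row_entries_Un[OF T] by auto
    moreover have "k + 1 \<notin> row_entries T 1"
    proof
      assume "k + 1 \<in> row_entries T 1"
      then obtain d1 where "(1, d1) \<in> S" "T (1, d1) = k + 1"
        by (auto simp: row_entries_def)
      moreover obtain d2 where "(2, d2) \<in> S" "T (2, d2) = k"
        using k(1) by (auto simp: row_entries_def)
      ultimately have "valley_at T k d1 d2"
        by (simp add: valley_at_def)
      then show False
        using vf by (simp add: valley_free_def)
    qed
    ultimately show "k + 1 \<in> row_entries T 2"
      by blast
  qed
  then show ?thesis
    using card_row_entries_1[OF T] s_le_e1 by simp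
qed

lemma valley_free_unique: "T \<in> Y \<Longrightarrow> T' \<in> Y \<Longrightarrow> valley_free T \<Longrightarrow> valley_free T' \<Longrightarrow> T = T'"
  by (simp add: tableau_eq_if_row_entries_eq row_entries_valley_free)

lemma peak_at_range: "T \<in> Y \<Longrightarrow> peak_at T t c1 c2 \<Longrightarrow> 1 \<le> t \<and> t < g"
  using tableau_range[of T "(1, c1)"] tableau_range[of T "(2, c2)"] by (auto simp: peak_at_def)

lemma peak_valley_values_differ: "T \<in> Y \<Longrightarrow> peak_at T t c1 c2 \<Longrightarrow> valley_at T k d1 d2 \<Longrightarrow> k \<noteq> t"
  using tableau_eq_iff[of T "(1, c1)" "(2, d2)"] by (auto simp: peak_at_def valley_at_def)

lemma row_entries_peak_at_distance_e1:
  assumes T: "T \<in> Y" and p: "peak_at T t d1 d2"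
    and dist: "box_dist (1, d1) (2, d2) = e1" and t: "t = e1 - s"
  shows "row_entries T 1 = {1..t}"
proof -
  have "d2 \<le> d1"
    using row2_successor_column_le[OF T] p by (auto simp: peak_at_def)
  then have "d1 = e1"
    using dist p by (auto simp: box_dist_def peak_at_def)
  have "row_entries T 1 \<subseteq> {1..t}"
  proof
    fix v assume "v \<in> row_entries T 1"
    then obtain c where c: "s < c" "c \<le> e1" "v = T (1, c)"
      by (auto simp: row_entries_def)
    have "T (1, c) \<le> T (1, e1)"
      using tableau_row_less[OF T, of 1 c e1] c by (cases "c = e1") auto
    then show "v \<in> {1..t}"
      using tableau_range[OF T, of "(1, c)"] p c \<open>d1 = e1\<close> by (auto simp: peak_at_def)
  qed
  moreover have "card (row_entries T 1) = card {1..t}"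
    using card_row_entries_1[OF T] t by simp
  ultimately show ?thesis
    by (simp add: card_subset_eq)
qed

lemma valley_free_peak_position:
  assumes u: "u \<in> Y" and vf: "valley_free u" and p: "peak_at u t c1 c2"
  shows "t = e1 - s" and "box_dist (1, c1) (2, c2) = e1"
proof -
  have row1: "row_entries u 1 = {1..e1 - s}"
    using row_entries_valley_free[OF u vf] .
  have row2: "row_entries u 2 = {1..g} - {1..e1 - s}"
    using row_entries_Un[OF u] row_entries_disjoint[OF u] row1 by blast
  have c1: "s < c1" "c1 \<le> e1" and c2: "0 < c2" "c2 \<le> e2" and vals: "u (1, c1) = t" "u (2, c2) = t + 1"
    using p by (simp_all add: peak_at_def)
  have "t \<in> row_entries u 1"
    unfolding row_entries_def using c1 vals by (intro image_eqI[of _ _ c1]) auto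
  moreover have "t + 1 \<in> row_entries u 2"
    unfolding row_entries_def using c2 vals by (intro image_eqI[of _ _ c2]) auto
  ultimately
  show t: "t = e1 - s"
    using row1 row2 by auto
  have "c1 = e1"
  proof (rule ccontr)
    assume "c1 \<noteq> e1"
    then have "t < u (1, e1)"
      using tableau_row_less[OF u, of 1 c1 e1] c1 vals by simp
    moreover have "u (1, e1) \<in> row_entries u 1"
      using c1 by (auto simp: row_entries_def)
    ultimately show False
      using row1 t by simp
  qed
  moreover have "c2 = 1"
  proof (rule ccontr)
    assume "c2 \<noteq> 1"
    then have "u (2, 1) < t + 1"
      using tableau_row_less[OF u, of 2 1 c2] c2 vals by simp
    moreover have "u (2, 1) \<in> row_entries u 2"
      using c2 by (auto simp: row_entries_def)
    then have "e1 - s < u (2, 1)"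
      using row2 by auto
    ultimately show False
      using t by simp
  qed
  ultimately show "box_dist (1, c1) (2, c2) = e1"
    using c1 s_nonneg by (simp add: box_dist_def)
qed

lemma restrict_pi_ta_valley_free_peak:
  assumes u: "u \<in> Y" and vf: "valley_free u" and p: "peak_at u t c1 c2"
  shows "restrict (pi_ta t (box_dist (1, c1) (2, c2))) Y = transposition_on Y u (swap_entries t u)"
proof -
  let ?a = "box_dist (1, c1) (2, c2)"
  have t: "1 \<le> t" "t < g"
    using peak_at_range[OF u p] by auto
  have peak_is_u: "T = u" if T: "T \<in> Y" and "peak_at T t d1 d2" "box_dist (1, d1) (2, d2) = ?a" for T d1 d2
    using tableau_eq_if_row_entries_eq[OF T u] row_entries_peak_at_distance_e1[OF T \<open>peak_at T t d1 d2\<close>]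
      row_entries_peak_at_distance_e1[OF u p] valley_free_peak_position[OF u vf p] that(3) by simp
  have moved: "T = u \<or> T = pi_ta t ?a u" if T: "T \<in> Y" and mv: "pi_ta t ?a T \<noteq> T" for T
  proof -
    obtain d1 d2 where d: "box_dist (1, d1) (2, d2) = ?a" "peak_at T t d1 d2 \<or> valley_at T t d1 d2"
      using pi_ta_moves_only_peaks_and_valleys[OF T t mv] by blast
    show ?thesis
    proof (cases "peak_at T t d1 d2")
      case False
      then have "valley_at T t d1 d2"
        using d by blast
      then have "swap_entries t T = u"
        using peak_is_u swap_valley_in_Y[OF T] peak_at_swap_valley[OF T] d by blast
      then show ?thesis
        using pi_ta_peak[OF u p] by auto
    qed (use peak_is_u T d in blast)
  qed
  show ?thesis
    using restrict_involution_eq_transposition_on[of Y "pi_ta t ?a" u] pi_ta_in_Y_and_involutive[OF _ t]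
      moved pi_ta_peak[OF u p] u by auto
qed

section \<open>The EH group of two-row tableaux\<close>

definition eh_generators :: "(((int \<times> int) \<Rightarrow> int) \<Rightarrow> ((int \<times> int) \<Rightarrow> int)) set" where
  "eh_generators = {restrict (pi_ta t a) Y | t a. 1 \<le> t \<and> t < g \<and> 0 < a}"

definition eh_group :: "(((int \<times> int) \<Rightarrow> int) \<Rightarrow> ((int \<times> int) \<Rightarrow> int)) set" where
  "eh_group = generate (BijGroup Y) eh_generators"

lemma restrict_pi_ta_in_Bij: "1 \<le> t \<Longrightarrow> t < g \<Longrightarrow> restrict (pi_ta t a) Y \<in> Bij Y"
  by (rule restrict_involution_in_Bij) (use pi_ta_in_Y_and_involutive in auto)

lemma subgroup_eh_group: "subgroup eh_group (BijGroup Y)"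
  unfolding eh_group_def
  by (rule group.generate_is_subgroup[OF group_BijGroup])
    (auto simp: eh_generators_def BijGroup_def restrict_pi_ta_in_Bij)

lemma restrict_pi_ta_peak_in_eh_group:
  assumes "T \<in> Y" and "peak_at T t c1 c2"
  shows "restrict (pi_ta t (box_dist (1, c1) (2, c2))) Y \<in> eh_group"
proof -
  have "1 \<le> t" "t < g" "0 < box_dist (1, c1) (2, c2)"
    using peak_at_range[OF assms] by (auto simp: box_dist_def)
  then show ?thesis
    unfolding eh_group_def eh_generators_def by (intro generate.incl) blast
qed

lemma transposition_pi_ta_peak_in_eh_group:
  assumes "transposition_on Y u v \<in> eh_group" "u \<in> Y" "v \<in> Y"
    and T: "T \<in> Y" and p: "peak_at T t c1 c2"
  shows "transposition_on Y (pi_ta t (box_dist (1, c1) (2, c2)) u) (pi_ta t (box_dist (1, c1) (2, c2)) v)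
    \<in> eh_group"
proof -
  let ?f = "restrict (pi_ta t (box_dist (1, c1) (2, c2))) Y"
  have t: "1 \<le> t" "t < g"
    using peak_at_range[OF T p] by auto
  have "?f \<otimes>\<^bsub>BijGroup Y\<^esub> transposition_on Y u v \<otimes>\<^bsub>BijGroup Y\<^esub> ?f \<in> eh_group"
    using assms restrict_pi_ta_peak_in_eh_group[OF T p] by (simp add: subgroup.m_closed[OF subgroup_eh_group])
  moreover have "?f \<otimes>\<^bsub>BijGroup Y\<^esub> transposition_on Y u v \<otimes>\<^bsub>BijGroup Y\<^esub> ?f
      = transposition_on Y (?f u) (?f v)"
    using pi_ta_in_Y_and_involutive[OF _ t] assms
    by (intro BijGroup_conj_transposition_on restrict_pi_ta_in_Bij[OF t]) auto
  ultimately show ?thesis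
    using assms by simp
qed

lemma peak_transposition_valley_free:
  assumes "u \<in> Y" "valley_free u" "peak_at u t c1 c2"
  shows "transposition_on Y u (swap_entries t u) \<in> eh_group"
  using restrict_pi_ta_valley_free_peak[OF assms] restrict_pi_ta_peak_in_eh_group[OF assms(1,3)]
  by simp

lemma peak_transposition_adjacent_valley:
  assumes u: "u \<in> Y" and p: "peak_at u t c1 c2" and v: "valley_at u k d1 d2"
    and adjacent: "k = t + 1 \<or> k + 1 = t"
    and IH: "transposition_on Y (swap_entries k u) u \<in> eh_group"
  shows "transposition_on Y u (swap_entries t u) \<in> eh_group"
proof -
  let ?w = "swap_entries k u" and ?\<pi> = "pi_ta t (box_dist (1, c1) (2, c2))"
  have w: "?w \<in> Y"
    using swap_valley_in_Y[OF u v] .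
  \<comment> \<open>in \<open>?w\<close> the entries \<open>t\<close> and \<open>t + 1\<close> lie in the same row\<close>
  have "?\<pi> ?w = ?w"
    using adjacent
  proof
    assume "k = t + 1"
    then show ?thesis
      using p v by (intro pi_ta_same_row[OF w, of 1 c1 d1])
        (auto simp: peak_at_def valley_at_def swap_entries_apply)
  next
    assume "k + 1 = t"
    then show ?thesis
      using p v by (intro pi_ta_same_row[OF w, of 2 d2 c2])
        (auto simp: peak_at_def valley_at_def swap_entries_apply)
  qed
  then have "transposition_on Y ?w (swap_entries t u) \<in> eh_group"
    using transposition_pi_ta_peak_in_eh_group[OF IH w u u p] pi_ta_peak[OF u p] by simp
  moreover have "u \<noteq> ?w" "u \<noteq> swap_entries t u"
    using v p swap_entries_neq by (metis valley_at_def peak_at_def)+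
  ultimately show ?thesis
    using subgroup_transposition_on_trans[OF subgroup_eh_group IH _ w u swap_peak_in_Y[OF u p]] by simp
qed

lemma peak_transposition_transport:
  assumes u: "u \<in> Y" and p: "peak_at u t c1 c2" and v: "valley_at u k d1 d2"
    and far: "k \<noteq> t + 1" "k + 1 \<noteq> t"
    and IH: "transposition_on Y (swap_entries k u) (swap_entries t (swap_entries k u)) \<in> eh_group"
  shows "transposition_on Y u (swap_entries t u) \<in> eh_group"
proof -
  let ?w = "swap_entries k u" and ?\<pi> = "pi_ta k (box_dist (1, d1) (2, d2))"
  have "k \<noteq> t"
    using peak_valley_values_differ[OF u p v] .
  have w: "?w \<in> Y" "peak_at ?w k d1 d2" "peak_at ?w t c1 c2"
    using swap_valley_in_Y[OF u v] peak_at_swap_valley[OF u v] peak_at_swap_other[OF p \<open>k \<noteq> t\<close> far]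
    by auto
  have x: "swap_entries t ?w \<in> Y" "peak_at (swap_entries t ?w) k d1 d2"
    using swap_peak_in_Y[OF w(1,3)] peak_at_swap_other[OF w(2)] \<open>k \<noteq> t\<close> far by auto
  have "?\<pi> ?w = u"
    using pi_ta_peak[OF w(1,2)] by simp
  moreover have "?\<pi> (swap_entries t ?w) = swap_entries t u"
    using pi_ta_peak[OF x] swap_entries_commute[OF \<open>k \<noteq> t\<close> far, of ?w] by simp
  ultimately show ?thesis
    using transposition_pi_ta_peak_in_eh_group[OF IH w(1) x(1) w(1,2)] by simp
qed

lemma peak_transposition_in_eh_group:
  assumes "u \<in> Y" and "peak_at u t c1 c2"
  shows "transposition_on Y u (swap_entries t u) \<in> eh_group"
  using assms
proof (induction "row1_sum u" arbitrary: u t c1 c2 rule: less_induct)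
  case less
  note u = less.prems(1) and p = less.prems(2)
  show ?case
  proof (cases "valley_free u")
    case True
    then show ?thesis
      using peak_transposition_valley_free[OF u _ p] by simp
  next
    case False
    then obtain k d1 d2 where v: "valley_at u k d1 d2"
      by (auto simp: valley_free_def)
    let ?w = "swap_entries k u"
    have w: "?w \<in> Y" "row1_sum ?w < row1_sum u"
      using swap_valley_in_Y[OF u v] row1_sum_swap_valley_less[OF u v] by auto
    show ?thesis
    proof (cases "k = t + 1 \<or> k + 1 = t")
      case True
      have "transposition_on Y ?w (swap_entries k ?w) \<in> eh_group"
        using less.hyps[OF w(2) w(1) peak_at_swap_valley[OF u v]] .
      then show ?thesis
        using peak_transposition_adjacent_valley[OF u p v True] by simp
    next
      case False
      then have "peak_at ?w t c1 c2"
        using peak_at_swap_other[OF p] peak_valley_values_differ[OF u p v] by auto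
      then show ?thesis
        using peak_transposition_transport[OF u p v] less.hyps[OF w(2) w(1)] False by auto
    qed
  qed
qed

lemma exists_transposition_descent:
  assumes u: "u \<in> Y" and "\<not> valley_free u"
  shows "\<exists>w\<in>Y. row1_sum w < row1_sum u \<and> w \<noteq> u \<and> transposition_on Y u w \<in> eh_group"
proof -
  obtain k d1 d2 where v: "valley_at u k d1 d2"
    using assms(2) by (auto simp: valley_free_def)
  let ?w = "swap_entries k u"
  have "transposition_on Y ?w (swap_entries k ?w) \<in> eh_group"
    using peak_transposition_in_eh_group[OF swap_valley_in_Y[OF u v] peak_at_swap_valley[OF u v]] .
  moreover have "?w \<noteq> u"
    using v swap_entries_neq[of u "(2, d2)" k] by (simp add: valley_at_def)
  ultimately show ?thesis
    using swap_valley_in_Y[OF u v] row1_sum_swap_valley_less[OF u v]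
    by (auto simp: transposition_on_commute)
qed

theorem eh_group_eq_carrier: "eh_group = carrier (BijGroup Y)"
  using transpositions_in_subgroup_by_descent[OF subgroup_eh_group valley_free_unique
      exists_transposition_descent]
  by (rule subgroup_eq_carrier_BijGroup_if_transpositions[OF finite_Y subgroup_eh_group])

end

lemma skew_shape_two_rows:
  "skew_shape g 1 d al be =
     {(k, c). (k = 1 \<and> al ! 0 - al ! 1 < c \<and> c \<le> al ! 0 + (g - d + 1) + be ! 0)
            \<or> (k = 2 \<and> 0 < c \<and> c \<le> al ! 0 + (g - d + 1) + be ! 1)}"
  (is "_ = ?rows")
proof (rule Set.set_eqI)
  fix x :: "int \<times> int"
  obtain k c where x: "x = (k, c)"
    by fastforce
  consider "k = 1" | "k = 2" | "k < 1 \<or> 2 < k"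
    by linarith
  then show "x \<in> skew_shape g 1 d al be \<longleftrightarrow> x \<in> ?rows"
    unfolding x skew_shape_def by cases auto
qed

lemma two_row_tableaux_YT:
  assumes "ram_seq d 1 al" and "ram_seq d 1 be" and "g - d + 1 \<ge> 0"
  shows "two_row_tableaux g (al ! 0 - al ! 1) (al ! 0 + (g - d + 1) + be ! 0)
    (al ! 0 + (g - d + 1) + be ! 1) (skew_shape g 1 d al be) (YT g 1 d al be)"
proof
  have "0 \<le> al ! 1" "al ! 1 \<le> al ! 0" "0 \<le> be ! 1" "be ! 1 \<le> be ! 0"
    using assms by (auto simp: ram_seq_def)
  then show "0 \<le> al ! 0 - al ! 1" "al ! 0 - al ! 1 \<le> al ! 0 + (g - d + 1) + be ! 0"
    "al ! 0 + (g - d + 1) + be ! 1 \<le> al ! 0 + (g - d + 1) + be ! 0"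
    using assms(3) by simp_all
qed (rule skew_shape_two_rows, rule YT_def)

text \<open>
  The hypothesis \<open>\<rho> = 0\<close> only says that the shape has \<open>g\<close> boxes; otherwise
  \<open>YT\<close> is empty and the claim is trivial.
\<close>

theorem mainTheorem11:
  fixes g d :: int and r :: nat and al be :: "int list"
  assumes "r = 1"
    and "ram_seq d r al" and "ram_seq d r be"
    and "g - d + int r \<ge> 0"
    and "brill_noether_rho g r d al be = 0"
  shows "EH_group g r d al be = carrier (BijGroup (YT g r d al be))"
proof -
  interpret two_row_tableaux g "al ! 0 - al ! 1" "al ! 0 + (g - d + 1) + be ! 0"
      "al ! 0 + (g - d + 1) + be ! 1" "skew_shape g 1 d al be" "YT g 1 d al be"
    using two_row_tableaux_YT assms(1-4) by simp
  have "EH_group g 1 d al be = eh_group"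
    unfolding EH_group_def eh_group_def eh_generators_def ..
  then show ?thesis
    using eh_group_eq_carrier assms(1) by simp
qed

end
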